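(* Let $X$ be a nonempty set and $\rho:X\times X\to[0,\infty)$ satisfy: (I) $\rho(x,y)=0$ iff $x=y$; (II) $\rho(x,y)=\rho(y,x)$; (VI) for every $a\in X$ and $\varepsilon>0$ there exists $\phi(a,\varepsilon)>0$ such that for all $b,c\in X$, if $\rho(a,b)<\phi(a,\varepsilon)$ and $\rho(c,b)<\phi(a,\varepsilon)$ then $\rho(a,c)<\varepsilon$. Then $(X,\rho)$ is metrizable, i.e. there is a metric $d$ on $X$ such that for every sequence $\{x_n\}$ and $x\in X$, $\lim_n\rho(x_n,x)=0$ iff $\lim_n d(x_n,x)=0$.
   Context: Condition (VI) is equivalent to: (coherence) if $\lim_n\rho(a,a_n)=0$ and $\lim_n\rho(a_n,b_n)=0$ then $\lim_n\rho(a,b_n)=0$; and also to Wilson's condition: for each $a\in X$ and $k>0$ there is $r>0$ such that whenever $\rho(a,b)\ge k$ and $c\in X$ is arbitrary, $\rho(a,c)+\rho(b,c)\ge r$. *)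

theory Defs
  imports "HOL-Analysis.Analysis"
begin

definition is_metric_on :: "'a set \<Rightarrow> ('a \<Rightarrow> 'a \<Rightarrow> real) \<Rightarrow> bool" where
  "is_metric_on X d \<longleftrightarrow>
     (\<forall>x\<in>X. \<forall>y\<in>X. d x y \<ge> 0) \<and>
     (\<forall>x\<in>X. \<forall>y\<in>X. d x y = 0 \<longleftrightarrow> x = y) \<and>
     (\<forall>x\<in>X. \<forall>y\<in>X. d x y = d y x) \<and>
     (\<forall>x\<in>X. \<forall>y\<in>X. \<forall>z\<in>X. d x z \<le> d x y + d y z)"

end

theory Submission
  imports Defs
begin

text \<open>
  The sets \<open>{y. \<rho> x y < r}\<close> generate a topology in which \<open>\<rho>\<close>-convergence is exactly
  topological convergence; condition (VI) makes it a regular \<open>T\<^sub>1\<close> space. Fix a well-order of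
  the points and send every point \<open>c\<close> to the least centre \<open>s\<close> whose open \<open>2\<^sup>-\<^sup>k\<close>-ball contains it.
  For fixed \<open>k, n\<close>, the unions, over all \<open>c\<close> with the same centre, of open \<open>2\<^sup>-\<^sup>n\<close>-balls
  around \<open>c\<close> (for those \<open>c\<close> whose four-step \<open>2\<^sup>-\<^sup>n\<close>-chains stay in the centre's ball) form a
  locally finite family, and together these families are a base. As in the Nagata--Smirnov
  theorem, a regular space with a \<open>\<sigma>\<close>-locally finite base is normal, and the Urysohn functions
  of pairs of base members yield countably many bounded pseudometrics whose weighted sum is a
  metric with the same convergent sequences.
\<close>

section \<open>A metric from a \<open>\<sigma>\<close>-locally finite base\<close>

locale sigma_locally_finite_base =
  fixes T :: "'a topology" and \<B> :: "nat \<Rightarrow> 'a set set"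
  assumes t1: "t1_space T"
    and regular: "regular_space T"
    and openin_base: "\<And>j W. W \<in> \<B> j \<Longrightarrow> openin T W"
    and locally_finite_base: "\<And>j. locally_finite_in T (\<B> j)"
    and base: "\<And>W x. openin T W \<Longrightarrow> x \<in> W \<Longrightarrow> \<exists>j B. B \<in> \<B> j \<and> x \<in> B \<and> B \<subseteq> W"
begin

lemma base_closure_disjoint:
  assumes "closedin T C" "x \<in> topspace T - C"
  obtains j B where "B \<in> \<B> j" "x \<in> B" "disjnt C (T closure_of B)"
proof -
  obtain U where U: "openin T U" "x \<in> U" "disjnt C (T closure_of U)"
    using regular assms unfolding regular_space by blast
  obtain j B where B: "B \<in> \<B> j" "x \<in> B" "B \<subseteq> U"
    using base[OF U(1,2)] by blast
  have "disjnt C (T closure_of B)"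
    using U(3) closure_of_mono[OF B(3)] by (meson disjnt_subset2)
  with B that show thesis by blast
qed

lemma closed_countable_open_cover:
  assumes "closedin T S" "closedin T C" "disjnt S C"
  obtains h :: "nat \<Rightarrow> 'a set" where
    "\<And>n. openin T (h n)" "\<And>n. disjnt C (T closure_of h n)" "S \<subseteq> (\<Union>n. h n)"
proof
  define \<F> where "\<F> n = {W \<in> \<B> n. disjnt C (T closure_of W)}" for n
  show "openin T (\<Union>(\<F> n))" for n
    unfolding \<F>_def by (auto intro: openin_base)
  show "disjnt C (T closure_of \<Union>(\<F> n))" for n
  proof -
    have "locally_finite_in T (\<F> n)"
      by (rule locally_finite_in_subset[OF locally_finite_base]) (auto simp: \<F>_def)
    then show ?thesis
      by (auto simp: closure_of_locally_finite_Union \<F>_def disjnt_def)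
  qed
  show "S \<subseteq> (\<Union>n. \<Union>(\<F> n))"
  proof
    fix x assume "x \<in> S"
    then have "x \<in> topspace T - C"
      using assms closedin_subset[OF assms(1)] by (auto simp: disjnt_def)
    then obtain j B where "B \<in> \<B> j" "x \<in> B" "disjnt C (T closure_of B)"
      using base_closure_disjoint[OF assms(2)] by blast
    then show "x \<in> (\<Union>n. \<Union>(\<F> n))" unfolding \<F>_def by blast
  qed
qed

lemma normal: "normal_space T"
  unfolding normal_space_def
proof clarify
  fix S C
  assume clo: "closedin T S" "closedin T C" and "disjnt S C"
  obtain h :: "nat \<Rightarrow> 'a set" where
    open_h: "\<And>n. openin T (h n)" and disjnt_h: "\<And>n. disjnt C (T closure_of (h n))"
    and S_h: "S \<subseteq> (\<Union>n. h n)"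
    using closed_countable_open_cover[OF clo \<open>disjnt S C\<close>] by metis
  obtain k :: "nat \<Rightarrow> 'a set" where
    open_k: "\<And>n. openin T (k n)" and disjnt_k: "\<And>n. disjnt S (T closure_of (k n))"
    and C_k: "C \<subseteq> (\<Union>n. k n)"
    using closed_countable_open_cover[OF clo(2,1)] \<open>disjnt S C\<close> disjnt_sym by metis
  define U where "U \<equiv> \<Union>i. h i - (\<Union>j<i. T closure_of k j)"
  define V where "V \<equiv> \<Union>i. k i - (\<Union>j\<le>i. T closure_of h j)"
  show "\<exists>U V. openin T U \<and> openin T V \<and> S \<subseteq> U \<and> C \<subseteq> V \<and> disjnt U V"
  proof (intro exI conjI)
    show "openin T U" "openin T V"
      unfolding U_def V_def
      by (force intro!: open_k open_h closedin_Union closedin_closure_of)+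
    show "S \<subseteq> U" "C \<subseteq> V"
      using S_h C_k disjnt_h disjnt_k by (fastforce simp: U_def V_def disjnt_iff)+
    have "\<And>x i j. \<lbrakk>x \<in> k i; x \<in> h j; \<forall>j\<le>i. x \<notin> T closure_of h j\<rbrakk>
                 \<Longrightarrow> \<exists>i<j. x \<in> T closure_of k i"
      by (metis in_closure_of linorder_not_less open_k openin_subset subsetD)
    then show "disjnt U V"
      by (force simp: U_def V_def disjnt_iff)
  qed
qed

definition core :: "nat \<Rightarrow> 'a set \<Rightarrow> 'a set" where
  "core m W = (\<Union>B\<in>{B \<in> \<B> m. T closure_of B \<subseteq> W}. T closure_of B)"

lemma closedin_core: "closedin T (core m W)"
  unfolding core_def
  by (rule closedin_Union_locally_finite_closure,
      rule locally_finite_in_subset[OF locally_finite_base]) auto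

definition bump :: "nat \<Rightarrow> 'a set \<Rightarrow> 'a \<Rightarrow> real" where
  "bump m W = (SOME f. continuous_map T (top_of_set {0..1}) f \<and>
                  f ` (topspace T - W) \<subseteq> {0} \<and> f ` core m W \<subseteq> {1})"

lemma bump:
  assumes "openin T W"
  shows "continuous_map T (top_of_set {0..1}) (bump m W)"
    and "\<And>y. y \<in> topspace T - W \<Longrightarrow> bump m W y = 0"
    and "\<And>y. y \<in> core m W \<Longrightarrow> bump m W y = 1"
proof -
  have disjoint: "disjnt (topspace T - W) (core m W)"
    unfolding disjnt_def core_def by blast
  obtain f where "continuous_map T (top_of_set {0..1}) f"
      "f ` (topspace T - W) \<subseteq> {0}" "f ` core m W \<subseteq> {1::real}"
    by (rule Urysohn_lemma[OF normal closedin_diff[OF closedin_topspace assms] closedin_core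
          disjoint, of "0::real" 1]) auto
  then have "\<exists>f. continuous_map T (top_of_set {0..1}) f \<and>
      f ` (topspace T - W) \<subseteq> {0} \<and> f ` core m W \<subseteq> {1::real}"
    by blast
  then have "continuous_map T (top_of_set {0..1}) (bump m W) \<and>
      bump m W ` (topspace T - W) \<subseteq> {0} \<and> bump m W ` core m W \<subseteq> {1}"
    unfolding bump_def by (rule someI_ex)
  then show "continuous_map T (top_of_set {0..1}) (bump m W)"
    and "\<And>y. y \<in> topspace T - W \<Longrightarrow> bump m W y = 0"
    and "\<And>y. y \<in> core m W \<Longrightarrow> bump m W y = 1"
    by (auto simp: image_subset_iff)
qed

lemma bump_bounds:
  assumes "openin T W" "y \<in> topspace T"
  shows "0 \<le> bump m W y" "bump m W y \<le> 1"
  using bump(1)[OF assms(1), where m = m] assms(2) unfolding continuous_map by auto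

text \<open>The \<open>insert 0\<close> keeps the supremum meaningful when \<open>\<B> j\<close> is empty.\<close>
definition pdist :: "nat \<times> nat \<Rightarrow> 'a \<Rightarrow> 'a \<Rightarrow> real" where
  "pdist p x y = Sup (insert 0 ((\<lambda>W. \<bar>bump (snd p) W x - bump (snd p) W y\<bar>) ` \<B> (fst p)))"

lemma bump_diff_le_1:
  assumes "W \<in> \<B> j" "x \<in> topspace T" "y \<in> topspace T"
  shows "\<bar>bump m W x - bump m W y\<bar> \<le> 1"
  using bump_bounds[OF openin_base[OF assms(1)] assms(2), of m]
    bump_bounds[OF openin_base[OF assms(1)] assms(3), of m]
  by linarith

lemma pdist_ge:
  assumes "W \<in> \<B> (fst p)" "x \<in> topspace T" "y \<in> topspace T"
  shows "\<bar>bump (snd p) W x - bump (snd p) W y\<bar> \<le> pdist p x y"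
  unfolding pdist_def
  by (rule cSup_upper) (use assms bump_diff_le_1 in \<open>auto intro!: bdd_aboveI[of _ 1]\<close>)

lemma pdist_nonneg:
  assumes "x \<in> topspace T" "y \<in> topspace T"
  shows "0 \<le> pdist p x y"
  unfolding pdist_def
  by (rule cSup_upper) (use assms bump_diff_le_1 in \<open>auto intro!: bdd_aboveI[of _ 1]\<close>)

lemma pdist_le:
  assumes "0 \<le> c" "\<And>W. W \<in> \<B> (fst p) \<Longrightarrow> \<bar>bump (snd p) W x - bump (snd p) W y\<bar> \<le> c"
  shows "pdist p x y \<le> c"
  unfolding pdist_def by (rule cSup_least) (use assms in auto)

lemma pdist_le_1:
  assumes "x \<in> topspace T" "y \<in> topspace T"
  shows "pdist p x y \<le> 1"
  by (rule pdist_le) (use assms bump_diff_le_1 in auto)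

lemma pdist_commute: "pdist p x y = pdist p y x"
  unfolding pdist_def by (simp add: abs_minus_commute)

lemma pdist_self: "pdist p x x = 0"
  unfolding pdist_def by (simp add: image_constant_conv)

lemma pdist_triangle:
  assumes "x \<in> topspace T" "y \<in> topspace T" "z \<in> topspace T"
  shows "pdist p x z \<le> pdist p x y + pdist p y z"
proof (rule pdist_le)
  show "0 \<le> pdist p x y + pdist p y z"
    using pdist_nonneg assms by (simp add: add_nonneg_nonneg)
  fix W assume W: "W \<in> \<B> (fst p)"
  show "\<bar>bump (snd p) W x - bump (snd p) W z\<bar> \<le> pdist p x y + pdist p y z"
    using pdist_ge[OF W assms(1,2)] pdist_ge[OF W assms(2,3)] by linarith
qed

lemma bump_tendsto:
  assumes "openin T W" "limitin T s x sequentially"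
  shows "(\<lambda>n. bump m W (s n)) \<longlonglongrightarrow> bump m W x"
proof -
  have "continuous_map T euclideanreal (bump m W)"
    using bump(1)[OF assms(1)] continuous_map_in_subtopology by blast
  from continuous_map_limit[OF this assms(2)] show ?thesis
    by (simp add: o_def)
qed

lemma pdist_tendsto_0:
  assumes "limitin T s x sequentially" "\<And>n. s n \<in> topspace T"
  shows "(\<lambda>n. pdist p (s n) x) \<longlonglongrightarrow> 0"
proof -
  have x: "x \<in> topspace T"
    using assms(1) by (simp add: limitin_topspace)
  obtain N where N: "openin T N" "x \<in> N" and fin: "finite {W \<in> \<B> (fst p). W \<inter> N \<noteq> {}}"
    using locally_finite_base[of "fst p"] x unfolding locally_finite_in_def by auto
  define M where "M = {W \<in> \<B> (fst p). W \<inter> N \<noteq> {}}"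
  define g where "g W y = \<bar>bump (snd p) W y - bump (snd p) W x\<bar>" for W y
  have bound: "pdist p y x \<le> (\<Sum>W\<in>M. g W y)" if y: "y \<in> N" "y \<in> topspace T" for y
  proof (rule pdist_le)
    show "0 \<le> (\<Sum>W\<in>M. g W y)"
      by (simp add: sum_nonneg g_def)
    fix W assume W: "W \<in> \<B> (fst p)"
    show "\<bar>bump (snd p) W y - bump (snd p) W x\<bar> \<le> (\<Sum>W\<in>M. g W y)"
    proof (cases "W \<in> M")
      case True
      then show ?thesis
        using fin unfolding M_def g_def by (intro member_le_sum) auto
    next
      case False
      then have "y \<notin> W" "x \<notin> W"
        using W y N unfolding M_def by auto
      then show ?thesis
        using bump(2)[OF openin_base[OF W]] y x by (simp add: g_def sum_nonneg)
    qed
  qed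
  have "(\<lambda>n. \<Sum>W\<in>M. g W (s n)) \<longlonglongrightarrow> 0"
  proof (rule tendsto_null_sum)
    fix W assume "W \<in> M"
    then have "(\<lambda>n. bump (snd p) W (s n)) \<longlonglongrightarrow> bump (snd p) W x"
      using bump_tendsto[OF openin_base assms(1)] unfolding M_def by blast
    then show "(\<lambda>n. g W (s n)) \<longlonglongrightarrow> 0"
      unfolding g_def by (intro tendsto_rabs_zero LIM_zero)
  qed
  moreover have "\<forall>\<^sub>F n in sequentially. s n \<in> N"
    using assms(1) N unfolding limitin_def by blast
  then have "\<forall>\<^sub>F n in sequentially. norm (pdist p (s n) x) \<le> (\<Sum>W\<in>M. g W (s n))"
    by eventually_elim (use bound assms(2) pdist_nonneg x in auto)
  ultimately show ?thesis
    by (rule Lim_null_comparison[rotated])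
qed

definition D :: "'a \<Rightarrow> 'a \<Rightarrow> real" where
  "D x y = (\<Sum>q. pdist (prod_decode q) x y / 2 ^ q)"

lemma pdist_term_bound:
  assumes "x \<in> topspace T" "y \<in> topspace T"
  shows "norm (pdist p x y / 2 ^ q) \<le> (1 / 2) ^ q"
  using pdist_nonneg[OF assms] pdist_le_1[OF assms]
  by (simp add: divide_right_mono power_one_over)

lemma summable_pdist_terms:
  assumes "x \<in> topspace T" "y \<in> topspace T"
  shows "summable (\<lambda>q. pdist (prod_decode q) x y / 2 ^ q)"
  by (rule summable_comparison_test[OF _ summable_geometric[of "1 / 2"]])
     (use pdist_term_bound[OF assms] in auto)

lemma D_nonneg: "x \<in> topspace T \<Longrightarrow> y \<in> topspace T \<Longrightarrow> 0 \<le> D x y"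
  unfolding D_def by (rule suminf_nonneg[OF summable_pdist_terms]) (simp_all add: pdist_nonneg)

lemma D_self: "D x x = 0"
  unfolding D_def pdist_self by simp

lemma D_commute: "D x y = D y x"
  unfolding D_def pdist_commute[of _ x y] ..

lemma D_triangle:
  assumes "x \<in> topspace T" "y \<in> topspace T" "z \<in> topspace T"
  shows "D x z \<le> D x y + D y z"
proof -
  have "D x z \<le> (\<Sum>q. pdist (prod_decode q) x y / 2 ^ q + pdist (prod_decode q) y z / 2 ^ q)"
    unfolding D_def
    using pdist_triangle[OF assms] assms
    by (intro suminf_le summable_add summable_pdist_terms)
       (simp_all add: add_divide_distrib[symmetric] divide_right_mono)
  also have "\<dots> = D x y + D y z"
    unfolding D_def using assms by (intro suminf_add[symmetric] summable_pdist_terms)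
  finally show ?thesis .
qed

lemma pdist_le_D:
  assumes "x \<in> topspace T" "y \<in> topspace T"
  shows "pdist (prod_decode q) x y / 2 ^ q \<le> D x y"
  using sum_le_suminf[OF summable_pdist_terms[OF assms], of "{q}"]
  by (simp add: D_def pdist_nonneg assms)

lemma D_bounded_below_outside:
  assumes "openin T W" "x \<in> W"
  obtains \<epsilon> where "\<epsilon> > 0" "\<And>y. y \<in> topspace T - W \<Longrightarrow> \<epsilon> \<le> D y x"
proof -
  have x: "x \<in> topspace T"
    using assms openin_subset by blast
  obtain j B where B: "B \<in> \<B> j" "x \<in> B" "B \<subseteq> W"
    using base[OF assms] by blast
  have open_B: "openin T B"
    using openin_base[OF B(1)] .
  obtain m B' where B': "B' \<in> \<B> m" "x \<in> B'" "disjnt (topspace T - B) (T closure_of B')"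
    using base_closure_disjoint[OF closedin_diff[OF closedin_topspace open_B]] x B(2) by blast
  have "T closure_of B' \<subseteq> B"
    using B'(3) closure_of_subset_topspace by (fastforce simp: disjnt_def)
  moreover have "x \<in> T closure_of B'"
    using closure_of_subset[OF openin_subset[OF openin_base[OF B'(1)]]] B'(2) by blast
  ultimately have "x \<in> core m B"
    unfolding core_def using B'(1) by blast
  then have bump_x: "bump m B x = 1"
    by (rule bump(3)[OF open_B])
  define q where "q = prod_encode (j, m)"
  show thesis
  proof (rule that[of "1 / 2 ^ q"])
    fix y assume y: "y \<in> topspace T - W"
    then have "bump m B y = 0"
      using bump(2)[OF open_B] B(3) by blast
    then have "1 \<le> pdist (j, m) y x"
      using pdist_ge[of B "(j, m)" y x] B(1) y x bump_x by simp
    then have "1 / 2 ^ q \<le> pdist (prod_decode q) y x / 2 ^ q"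
      by (simp add: q_def divide_right_mono)
    also have "\<dots> \<le> D y x"
      by (rule pdist_le_D) (use y x in auto)
    finally show "1 / 2 ^ q \<le> D y x" .
  qed simp
qed

lemma D_tendsto_0:
  assumes "limitin T s x sequentially" "\<And>n. s n \<in> topspace T"
  shows "(\<lambda>n. D (s n) x) \<longlonglongrightarrow> 0"
proof -
  have x: "x \<in> topspace T"
    using assms(1) by (simp add: limitin_topspace)
  have bound: "norm (pdist (prod_decode q) (s n) x / 2 ^ q) \<le> (1 / 2) ^ q" for q n
    using pdist_term_bound assms(2) x by blast
  have "(\<lambda>n. \<Sum>q. pdist (prod_decode q) (s n) x / 2 ^ q) \<longlonglongrightarrow> (\<Sum>q. 0)"
    by (rule conjunct2[OF conjunct2[OF tannerys_theorem[where M = "\<lambda>q. (1 / 2) ^ q"]]])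
       (use bound in \<open>auto intro!: always_eventually tendsto_divide_zero pdist_tendsto_0 assms
         simp: summable_geometric\<close>)
  then show ?thesis
    unfolding D_def by simp
qed

lemma D_is_metric: "is_metric_on (topspace T) D"
  unfolding is_metric_on_def
proof (intro conjI ballI)
  fix x y assume x: "x \<in> topspace T" and y: "y \<in> topspace T"
  show "0 \<le> D x y"
    by (rule D_nonneg[OF x y])
  show "D x y = D y x"
    by (rule D_commute)
  show "D x y = 0 \<longleftrightarrow> x = y"
  proof
    assume "D x y = 0"
    show "x = y"
    proof (rule ccontr)
      assume "x \<noteq> y"
      then obtain U where U: "openin T U" "y \<in> U" "x \<notin> U"
        using t1 x y unfolding t1_space_def by metis
      obtain \<epsilon> where "\<epsilon> > 0" "\<And>z. z \<in> topspace T - U \<Longrightarrow> \<epsilon> \<le> D z y"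
        using D_bounded_below_outside[OF U(1,2)] by blast
      with x U(3) \<open>D x y = 0\<close> show False
        by force
    qed
  qed (simp add: D_self)
next
  fix x y z assume "x \<in> topspace T" "y \<in> topspace T" "z \<in> topspace T"
  then show "D x z \<le> D x y + D y z"
    by (rule D_triangle)
qed

lemma tendsto_D_iff_limitin:
  assumes "x \<in> topspace T" "\<And>n. s n \<in> topspace T"
  shows "(\<lambda>n. D (s n) x) \<longlonglongrightarrow> 0 \<longleftrightarrow> limitin T s x sequentially"
proof
  assume lim: "(\<lambda>n. D (s n) x) \<longlonglongrightarrow> 0"
  show "limitin T s x sequentially"
    unfolding limitin_def
  proof (intro conjI allI impI)
    fix U assume "openin T U \<and> x \<in> U"
    then obtain \<epsilon> where "\<epsilon> > 0" and \<epsilon>: "\<And>y. y \<in> topspace T - U \<Longrightarrow> \<epsilon> \<le> D y x"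
      by (meson D_bounded_below_outside)
    from order_tendstoD(2)[OF lim \<open>\<epsilon> > 0\<close>]
    show "\<forall>\<^sub>F n in sequentially. s n \<in> U"
      by eventually_elim (use \<epsilon> assms(2) in force)
  qed (rule assms(1))
qed (rule D_tendsto_0[OF _ assms(2)])

end

section \<open>Coherent semimetrics\<close>

lemma finite_if_all_equal:
  assumes "\<And>s t. s \<in> S \<Longrightarrow> t \<in> S \<Longrightarrow> s = t"
  shows "finite S"
proof (cases "S = {}")
  case False
  then obtain s where "s \<in> S" by blast
  with assms have "S \<subseteq> {s}" by blast
  then show ?thesis by (rule finite_subset) simp
qed simp

definition well_order_UNIV :: "'a rel" where
  "well_order_UNIV = (SOME r. Well_order r \<and> Field r = UNIV)"

lemma wo_rel_well_order_UNIV: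
  "wo_rel (well_order_UNIV :: 'a rel)" "Field (well_order_UNIV :: 'a rel) = UNIV"
proof -
  have "Well_order (well_order_UNIV :: 'a rel) \<and> Field (well_order_UNIV :: 'a rel) = UNIV"
    unfolding well_order_UNIV_def by (rule someI_ex[OF well_ordering])
  then show "wo_rel (well_order_UNIV :: 'a rel)" "Field (well_order_UNIV :: 'a rel) = UNIV"
    by (auto simp: wo_rel_def)
qed

locale coherent_semimetric =
  fixes X :: "'a set" and \<rho> :: "'a \<Rightarrow> 'a \<Rightarrow> real"
  assumes nonneg: "\<And>x y. x \<in> X \<Longrightarrow> y \<in> X \<Longrightarrow> 0 \<le> \<rho> x y"
    and zero_iff: "\<And>x y. x \<in> X \<Longrightarrow> y \<in> X \<Longrightarrow> \<rho> x y = 0 \<longleftrightarrow> x = y"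
    and commute: "\<And>x y. x \<in> X \<Longrightarrow> y \<in> X \<Longrightarrow> \<rho> x y = \<rho> y x"
    and coherent: "\<And>a \<epsilon>. a \<in> X \<Longrightarrow> \<epsilon> > 0 \<Longrightarrow> \<exists>\<phi>>0. \<forall>b\<in>X. \<forall>c\<in>X.
               \<rho> a b < \<phi> \<and> \<rho> c b < \<phi> \<longrightarrow> \<rho> a c < \<epsilon>"
begin

definition rball :: "real \<Rightarrow> 'a \<Rightarrow> 'a set" where
  "rball r x = {y \<in> X. \<rho> x y < r}"

definition rho_topology :: "'a topology" where
  "rho_topology = topology (\<lambda>U. U \<subseteq> X \<and> (\<forall>x\<in>U. \<exists>r>0. rball r x \<subseteq> U))"

lemma istopology_rball_open: "istopology (\<lambda>U. U \<subseteq> X \<and> (\<forall>x\<in>U. \<exists>r>0. rball r x \<subseteq> U))"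
  unfolding istopology_def
proof (rule conjI; intro allI impI)
  fix S U assume S: "S \<subseteq> X \<and> (\<forall>x\<in>S. \<exists>r>0. rball r x \<subseteq> S)"
    and U: "U \<subseteq> X \<and> (\<forall>x\<in>U. \<exists>r>0. rball r x \<subseteq> U)"
  show "S \<inter> U \<subseteq> X \<and> (\<forall>x\<in>S \<inter> U. \<exists>r>0. rball r x \<subseteq> S \<inter> U)"
  proof (intro conjI ballI)
    fix x assume "x \<in> S \<inter> U"
    then obtain r1 r2 where "r1 > 0" "rball r1 x \<subseteq> S" "r2 > 0" "rball r2 x \<subseteq> U"
      using S U by blast
    then show "\<exists>r>0. rball r x \<subseteq> S \<inter> U"
      by (intro exI[of _ "min r1 r2"]) (auto simp: rball_def)
  qed (use S in blast)
next
  fix K assume K: "\<forall>S\<in>K. S \<subseteq> X \<and> (\<forall>x\<in>S. \<exists>r>0. rball r x \<subseteq> S)"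
  show "\<Union>K \<subseteq> X \<and> (\<forall>x\<in>\<Union>K. \<exists>r>0. rball r x \<subseteq> \<Union>K)"
  proof (intro conjI ballI)
    fix x assume "x \<in> \<Union>K"
    then obtain S where "S \<in> K" "x \<in> S" by blast
    with K obtain r where "r > 0" "rball r x \<subseteq> S" by blast
    with \<open>S \<in> K\<close> show "\<exists>r>0. rball r x \<subseteq> \<Union>K" by blast
  qed (use K in blast)
qed

lemma openin_rho_topology:
  "openin rho_topology U \<longleftrightarrow> U \<subseteq> X \<and> (\<forall>x\<in>U. \<exists>r>0. rball r x \<subseteq> U)"
  unfolding rho_topology_def using istopology_rball_open by simp

lemma topspace_rho_topology [simp]: "topspace rho_topology = X"
proof -
  have "openin rho_topology X"
    unfolding openin_rho_topology by (auto simp: rball_def intro: exI[of _ 1])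
  then show ?thesis
    using openin_rho_topology openin_subset by (metis openin_topspace subset_antisym)
qed

lemma openin_rball_subset:
  assumes "openin rho_topology U" "x \<in> U"
  obtains r where "r > 0" "rball r x \<subseteq> U"
  using assms openin_rho_topology by blast

lemma rho_self: "x \<in> X \<Longrightarrow> \<rho> x x = 0"
  using zero_iff by blast

lemma coherent_two_step:
  assumes "x \<in> X" "\<epsilon> > 0"
  obtains r where "0 < r" "r \<le> \<epsilon>"
    "\<And>b c. b \<in> X \<Longrightarrow> c \<in> X \<Longrightarrow> \<rho> x b < r \<Longrightarrow> \<rho> b c < r \<Longrightarrow> \<rho> x c < \<epsilon>"
proof -
  obtain \<phi> where "\<phi> > 0" and \<phi>: "\<forall>b\<in>X. \<forall>c\<in>X. \<rho> x b < \<phi> \<and> \<rho> c b < \<phi> \<longrightarrow> \<rho> x c < \<epsilon>"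
    using coherent assms by blast
  show thesis
    by (rule that[of "min \<phi> \<epsilon>"]) (use \<phi> \<open>\<phi> > 0\<close> assms commute in auto)
qed

lemma coherent_four_step:
  assumes "x \<in> X" "\<epsilon> > 0"
  obtains r where "0 < r"
    "\<And>y1 y2 y3 y4. y1 \<in> X \<Longrightarrow> y2 \<in> X \<Longrightarrow> y3 \<in> X \<Longrightarrow> y4 \<in> X \<Longrightarrow>
       \<rho> x y1 < r \<Longrightarrow> \<rho> y1 y2 < r \<Longrightarrow> \<rho> y2 y3 < r \<Longrightarrow> \<rho> y3 y4 < r \<Longrightarrow> \<rho> x y4 < \<epsilon>"
proof -
  obtain r3 where r3: "r3 > 0" "r3 \<le> \<epsilon>"
      "\<And>b c. b \<in> X \<Longrightarrow> c \<in> X \<Longrightarrow> \<rho> x b < r3 \<Longrightarrow> \<rho> b c < r3 \<Longrightarrow> \<rho> x c < \<epsilon>"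
    using coherent_two_step assms by blast
  obtain r2 where r2: "r2 > 0" "r2 \<le> r3"
      "\<And>b c. b \<in> X \<Longrightarrow> c \<in> X \<Longrightarrow> \<rho> x b < r2 \<Longrightarrow> \<rho> b c < r2 \<Longrightarrow> \<rho> x c < r3"
    using coherent_two_step assms(1) r3(1) by blast
  obtain r1 where r1: "r1 > 0" "r1 \<le> r2"
      "\<And>b c. b \<in> X \<Longrightarrow> c \<in> X \<Longrightarrow> \<rho> x b < r1 \<Longrightarrow> \<rho> b c < r1 \<Longrightarrow> \<rho> x c < r2"
    using coherent_two_step assms(1) r2(1) by blast
  show thesis
  proof (rule that[OF r1(1)])
    fix y1 y2 y3 y4 assume y: "y1 \<in> X" "y2 \<in> X" "y3 \<in> X" "y4 \<in> X"
      and steps: "\<rho> x y1 < r1" "\<rho> y1 y2 < r1" "\<rho> y2 y3 < r1" "\<rho> y3 y4 < r1"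
    have "\<rho> x y2 < r2"
      using r1(3) y steps by blast
    then have "\<rho> x y3 < r3"
      using r2(3) y steps r1(2) by force
    then show "\<rho> x y4 < \<epsilon>"
      using r3(3) y steps r1(2) r2(2) by force
  qed
qed

definition oball :: "real \<Rightarrow> 'a \<Rightarrow> 'a set" where
  "oball r x = rho_topology interior_of rball r x"

lemma openin_oball: "openin rho_topology (oball r x)"
  by (simp add: oball_def)

lemma oball_subset_rball: "oball r x \<subseteq> rball r x"
  unfolding oball_def by (rule interior_of_subset)

lemma centre_in_oball:
  assumes "x \<in> X" "r > 0"
  shows "x \<in> oball r x"
proof -
  \<comment> \<open>\<open>X - C\<close> turns out to be an open neighbourhood of \<open>x\<close> inside the ball\<close>
  define C where "C = {z \<in> X. \<forall>\<delta>>0. \<exists>y\<in>X. r \<le> \<rho> x y \<and> \<rho> z y < \<delta>}"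
  have "openin rho_topology (X - C)"
    unfolding openin_rho_topology
  proof (intro conjI ballI)
    fix z assume z: "z \<in> X - C"
    then obtain \<delta> where "\<delta> > 0" and \<delta>: "\<forall>y\<in>X. r \<le> \<rho> x y \<longrightarrow> \<delta> \<le> \<rho> z y"
      unfolding C_def by (auto simp: not_less)
    obtain \<phi> where "\<phi> > 0" and \<phi>: "\<forall>b\<in>X. \<forall>c\<in>X. \<rho> z b < \<phi> \<and> \<rho> c b < \<phi> \<longrightarrow> \<rho> z c < \<delta>"
      using coherent z \<open>\<delta> > 0\<close> by blast
    have "rball \<phi> z \<subseteq> X - C"
    proof
      fix w assume w: "w \<in> rball \<phi> z"
      have "w \<notin> C"
      proof
        assume "w \<in> C"
        then obtain y where y: "y \<in> X" "r \<le> \<rho> x y" "\<rho> w y < \<phi>"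
          unfolding C_def using \<open>\<phi> > 0\<close> by blast
        then have "\<rho> z y < \<delta>"
          using \<phi> w commute[of w y] by (auto simp: rball_def)
        with \<delta> y show False by force
      qed
      with w show "w \<in> X - C" by (simp add: rball_def)
    qed
    with \<open>\<phi> > 0\<close> show "\<exists>r>0. rball r z \<subseteq> X - C" by blast
  qed auto
  moreover have "x \<in> X - C"
    using assms unfolding C_def by (auto intro!: exI[of _ r])
  moreover have "X - C \<subseteq> rball r x"
  proof
    fix z assume z: "z \<in> X - C"
    have "\<not> r \<le> \<rho> x z"
    proof
      assume "r \<le> \<rho> x z"
      then have "z \<in> C"
        using z rho_self[of z] unfolding C_def by auto
      with z show False by blast
    qed
    with z show "z \<in> rball r x"
      by (simp add: rball_def)
  qed
  ultimately show ?thesis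
    unfolding oball_def by (meson interior_of_maximal subsetD)
qed

lemma limitin_rho_topology_iff:
  assumes x: "x \<in> X" and s: "\<And>n. s n \<in> X"
  shows "limitin rho_topology s x sequentially \<longleftrightarrow> (\<lambda>n. \<rho> (s n) x) \<longlonglongrightarrow> 0"
proof
  assume lim: "limitin rho_topology s x sequentially"
  show "(\<lambda>n. \<rho> (s n) x) \<longlonglongrightarrow> 0"
    unfolding tendsto_iff
  proof (intro allI impI)
    fix \<epsilon> :: real assume "\<epsilon> > 0"
    have "\<forall>\<^sub>F n in sequentially. s n \<in> oball \<epsilon> x"
      using lim centre_in_oball[OF x \<open>\<epsilon> > 0\<close>] openin_oball unfolding limitin_def by blast
    moreover have "dist (\<rho> (s n) x) 0 < \<epsilon>" if "s n \<in> oball \<epsilon> x" for n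
      using that oball_subset_rball[of \<epsilon> x] commute[OF x s] nonneg[OF s x]
      by (auto simp: rball_def)
    ultimately show "\<forall>\<^sub>F n in sequentially. dist (\<rho> (s n) x) 0 < \<epsilon>"
      by (rule eventually_mono)
  qed
next
  assume lim: "(\<lambda>n. \<rho> (s n) x) \<longlonglongrightarrow> 0"
  show "limitin rho_topology s x sequentially"
    unfolding limitin_def
  proof (intro conjI allI impI)
    fix U assume "openin rho_topology U \<and> x \<in> U"
    then obtain r where "r > 0" "rball r x \<subseteq> U"
      by (meson openin_rball_subset)
    from order_tendstoD(2)[OF lim \<open>r > 0\<close>]
    show "\<forall>\<^sub>F n in sequentially. s n \<in> U"
      by eventually_elim (use x s \<open>rball r x \<subseteq> U\<close> commute in \<open>auto simp: rball_def\<close>)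
  qed (simp add: x)
qed

lemma t1_rho_topology: "t1_space rho_topology"
  unfolding t1_space_def
proof (intro ballI impI)
  fix x y assume x: "x \<in> topspace rho_topology" and y: "y \<in> topspace rho_topology" and "x \<noteq> y"
  then have "\<rho> x y > 0"
    using nonneg[of x y] zero_iff[of x y] x y by fastforce
  then have "x \<in> oball (\<rho> x y) x" "y \<notin> oball (\<rho> x y) x"
    using centre_in_oball x oball_subset_rball[of "\<rho> x y" x] by (auto simp: rball_def)
  then show "\<exists>U. openin rho_topology U \<and> x \<in> U \<and> y \<notin> U"
    using openin_oball by blast
qed

lemma regular_rho_topology: "regular_space rho_topology"
  unfolding regular_space
proof (intro allI impI)
  fix C a assume "closedin rho_topology C \<and> a \<in> topspace rho_topology - C"
  then have U: "openin rho_topology (X - C)" "a \<in> X - C"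
    by (auto simp: closedin_def)
  then obtain r where "r > 0" "rball r a \<subseteq> X - C"
    by (meson openin_rball_subset)
  obtain \<delta> where "\<delta> > 0" and
    \<delta>: "\<And>b c. b \<in> X \<Longrightarrow> c \<in> X \<Longrightarrow> \<rho> a b < \<delta> \<Longrightarrow> \<rho> b c < \<delta> \<Longrightarrow> \<rho> a c < r"
    using coherent_two_step U \<open>r > 0\<close> by (metis DiffD1)
  have "rho_topology closure_of oball \<delta> a \<subseteq> X - C"
  proof
    fix z assume z: "z \<in> rho_topology closure_of oball \<delta> a"
    then have "z \<in> X"
      using closure_of_subset_topspace by fastforce
    then obtain b where "b \<in> oball \<delta> a" "b \<in> oball \<delta> z"
      using z centre_in_oball[OF _ \<open>\<delta> > 0\<close>] openin_oball unfolding in_closure_of by blast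
    then have "b \<in> X" "\<rho> a b < \<delta>" "\<rho> z b < \<delta>"
      using oball_subset_rball by (auto simp: rball_def)
    then have "\<rho> a z < r"
      using \<delta> \<open>z \<in> X\<close> commute[of z b] by auto
    then show "z \<in> X - C"
      using \<open>rball r a \<subseteq> X - C\<close> \<open>z \<in> X\<close> by (auto simp: rball_def)
  qed
  then show "\<exists>U. openin rho_topology U \<and> a \<in> U \<and> disjnt C (rho_topology closure_of U)"
    using centre_in_oball[OF _ \<open>\<delta> > 0\<close>] U openin_oball
    by (intro exI[of _ "oball \<delta> a"]) (auto simp: disjnt_def)
qed

definition least_centre :: "nat \<Rightarrow> 'a \<Rightarrow> 'a" where
  "least_centre k c = wo_rel.minim well_order_UNIV {s \<in> X. c \<in> oball ((1/2) ^ k) s}"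

lemma least_centre:
  assumes "c \<in> X"
  shows "least_centre k c \<in> X" "c \<in> oball ((1/2) ^ k) (least_centre k c)"
    and "\<And>s. s \<in> X \<Longrightarrow> c \<in> oball ((1/2) ^ k) s \<Longrightarrow> (least_centre k c, s) \<in> well_order_UNIV"
proof -
  let ?S = "{s \<in> X. c \<in> oball ((1/2) ^ k) s}"
  have "c \<in> ?S"
    using assms centre_in_oball[OF assms, of "(1/2) ^ k"] by simp
  then have "least_centre k c \<in> ?S"
    unfolding least_centre_def
    by (intro wo_rel.minim_in[OF wo_rel_well_order_UNIV(1)]) (auto simp: wo_rel_well_order_UNIV(2))
  then show "least_centre k c \<in> X" "c \<in> oball ((1/2) ^ k) (least_centre k c)"
    by auto
  show "(least_centre k c, s) \<in> well_order_UNIV" if "s \<in> X" "c \<in> oball ((1/2) ^ k) s" for s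
    unfolding least_centre_def
    by (rule wo_rel.minim_least[OF wo_rel_well_order_UNIV(1)])
       (use that in \<open>auto simp: wo_rel_well_order_UNIV(2)\<close>)
qed

lemma least_centre_eqI:
  assumes "c \<in> X" "c' \<in> X"
    and "c' \<in> oball ((1/2) ^ k) (least_centre k c)" "c \<in> oball ((1/2) ^ k) (least_centre k c')"
  shows "least_centre k c = least_centre k c'"
  using wo_rel.ANTISYM[OF wo_rel_well_order_UNIV(1)]
    least_centre(3)[OF assms(1) least_centre(1)[OF assms(2)] assms(4)]
    least_centre(3)[OF assms(2) least_centre(1)[OF assms(1)] assms(3)]
  by (rule antisymD)

definition four_chains_in :: "'a \<Rightarrow> real \<Rightarrow> 'a set \<Rightarrow> bool" where
  "four_chains_in c r W \<longleftrightarrow> (\<forall>y1\<in>X. \<forall>y2\<in>X. \<forall>y3\<in>X. \<forall>y4\<in>X.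
      \<rho> c y1 < r \<longrightarrow> \<rho> y1 y2 < r \<longrightarrow> \<rho> y2 y3 < r \<longrightarrow> \<rho> y3 y4 < r \<longrightarrow> y4 \<in> W)"

definition base_set :: "nat \<Rightarrow> nat \<Rightarrow> 'a \<Rightarrow> 'a set" where
  "base_set k n s = (\<Union>c\<in>{c \<in> X. least_centre k c = s \<and>
      four_chains_in c ((1/2) ^ n) (oball ((1/2) ^ k) s)}. oball ((1/2) ^ n) c)"

lemma openin_base_set: "openin rho_topology (base_set k n s)"
  unfolding base_set_def by (auto intro: openin_oball)

lemma base_set_subset_oball: "base_set k n s \<subseteq> oball ((1/2) ^ k) s"
proof
  fix y assume "y \<in> base_set k n s"
  then obtain c where c: "c \<in> X" "four_chains_in c ((1/2) ^ n) (oball ((1/2) ^ k) s)"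
      "y \<in> oball ((1/2) ^ n) c"
    unfolding base_set_def by blast
  then have y: "y \<in> X" "\<rho> c y < (1/2) ^ n"
    using oball_subset_rball by (auto simp: rball_def)
  have "\<rho> y y < (1/2) ^ n"
    using rho_self[OF y(1)] by simp
  with c(2) y show "y \<in> oball ((1/2) ^ k) s"
    unfolding four_chains_in_def by (meson y(1))
qed

lemma locally_finite_base_sets: "locally_finite_in rho_topology (base_set k n ` X)"
  unfolding locally_finite_in_def
proof (intro conjI ballI)
  show "\<Union> (base_set k n ` X) \<subseteq> topspace rho_topology"
    using openin_base_set openin_subset by blast
  fix x assume "x \<in> topspace rho_topology"
  then have x: "x \<in> X" by simp
  define r :: real where "r = (1/2) ^ n"
  define N where "N = oball r x"
  have centre_eq: "s = t"
    if meets: "base_set k n s \<inter> N \<noteq> {}" "base_set k n t \<inter> N \<noteq> {}" for s t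
  proof -
    obtain y c where y: "y \<in> N" and c: "c \<in> X" "least_centre k c = s"
        "four_chains_in c r (oball ((1/2) ^ k) s)" "y \<in> oball r c"
      using meets(1) unfolding base_set_def r_def by blast
    obtain y' c' where y': "y' \<in> N" and c': "c' \<in> X" "least_centre k c' = t"
        "four_chains_in c' r (oball ((1/2) ^ k) t)" "y' \<in> oball r c'"
      using meets(2) unfolding base_set_def r_def by blast
    have "y \<in> X" "\<rho> c y < r" "\<rho> x y < r" "y' \<in> X" "\<rho> c' y' < r" "\<rho> x y' < r"
      using y y' c(4) c'(4) oball_subset_rball unfolding N_def rball_def by blast+
    moreover have "\<rho> y x < r" "\<rho> y' c' < r" "\<rho> y' x < r" "\<rho> y c < r"
      using calculation x c(1) c'(1) commute by metis+
    \<comment> \<open>\<open>c, y, x, y', c'\<close> is a four-step chain in both directions\<close>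
    ultimately have "c' \<in> oball ((1/2) ^ k) s" "c \<in> oball ((1/2) ^ k) t"
      using c(3) c'(3) x c(1) c'(1) unfolding four_chains_in_def by blast+
    then show "s = t"
      using least_centre_eqI[OF c(1) c'(1)] c(2) c'(2) by blast
  qed
  have "{W \<in> base_set k n ` X. W \<inter> N \<noteq> {}} = base_set k n ` {s \<in> X. base_set k n s \<inter> N \<noteq> {}}"
    by blast
  moreover have "finite {s \<in> X. base_set k n s \<inter> N \<noteq> {}}"
    by (rule finite_if_all_equal) (use centre_eq in blast)
  ultimately have "finite {W \<in> base_set k n ` X. W \<inter> N \<noteq> {}}"
    by simp
  moreover have "openin rho_topology N" "x \<in> N"
    using openin_oball centre_in_oball[OF x] by (simp_all add: N_def r_def)
  ultimately show "\<exists>N. openin rho_topology N \<and> x \<in> N \<and> finite {W \<in> base_set k n ` X. W \<inter> N \<noteq> {}}"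
    by blast
qed

lemma mem_base_set_least_centre:
  assumes x: "x \<in> X"
  obtains n where "x \<in> base_set k n (least_centre k x)"
proof -
  define s where "s = least_centre k x"
  obtain \<delta> where "\<delta> > 0" and \<delta>: "rball \<delta> x \<subseteq> oball ((1/2) ^ k) s"
    using openin_rball_subset[OF openin_oball least_centre(2)[OF x]] unfolding s_def by blast
  obtain r where "r > 0" and r: "\<And>y1 y2 y3 y4. y1 \<in> X \<Longrightarrow> y2 \<in> X \<Longrightarrow> y3 \<in> X \<Longrightarrow> y4 \<in> X \<Longrightarrow>
       \<rho> x y1 < r \<Longrightarrow> \<rho> y1 y2 < r \<Longrightarrow> \<rho> y2 y3 < r \<Longrightarrow> \<rho> y3 y4 < r \<Longrightarrow> \<rho> x y4 < \<delta>"
    using coherent_four_step[OF x \<open>\<delta> > 0\<close>] by blast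
  obtain n where n: "(1/2) ^ n < r"
    using real_arch_pow_inv[OF \<open>r > 0\<close>, of "1/2"] by auto
  have "four_chains_in x ((1/2) ^ n) (oball ((1/2) ^ k) s)"
    unfolding four_chains_in_def
  proof (intro ballI impI)
    fix y1 y2 y3 y4 assume y: "y1 \<in> X" "y2 \<in> X" "y3 \<in> X" "y4 \<in> X"
      and "\<rho> x y1 < (1/2) ^ n" "\<rho> y1 y2 < (1/2) ^ n" "\<rho> y2 y3 < (1/2) ^ n" "\<rho> y3 y4 < (1/2) ^ n"
    with n have "\<rho> x y4 < \<delta>"
      by (intro r[OF y]) auto
    with \<delta> y(4) show "y4 \<in> oball ((1/2) ^ k) s"
      by (auto simp: rball_def)
  qed
  then have "x \<in> base_set k n s"
    unfolding base_set_def using x centre_in_oball[OF x, of "(1/2) ^ n"] by (auto simp: s_def)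
  then show thesis
    using that unfolding s_def by blast
qed

lemma base_set_within_open:
  assumes "openin rho_topology W" "x \<in> W"
  obtains k n where "x \<in> base_set k n (least_centre k x)" "base_set k n (least_centre k x) \<subseteq> W"
proof -
  have x: "x \<in> X"
    using assms openin_subset by fastforce
  obtain r where "r > 0" and r: "rball r x \<subseteq> W"
    using openin_rball_subset[OF assms] by blast
  obtain \<phi> where "\<phi> > 0" and \<phi>: "\<forall>b\<in>X. \<forall>c\<in>X. \<rho> x b < \<phi> \<and> \<rho> c b < \<phi> \<longrightarrow> \<rho> x c < r"
    using coherent[OF x \<open>r > 0\<close>] by blast
  obtain k where k: "(1/2) ^ k < \<phi>"
    using real_arch_pow_inv[OF \<open>\<phi> > 0\<close>, of "1/2"] by auto
  obtain n where n: "x \<in> base_set k n (least_centre k x)"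
    using mem_base_set_least_centre[OF x] by blast
  define s where "s = least_centre k x"
  have "s \<in> X" "x \<in> oball ((1/2) ^ k) s"
    using least_centre[OF x, where k = k] by (simp_all add: s_def)
  then have s: "s \<in> X" "\<rho> s x < \<phi>"
    using oball_subset_rball[of "(1/2) ^ k" s] k by (auto simp: rball_def)
  have "base_set k n s \<subseteq> W"
  proof
    fix y assume "y \<in> base_set k n s"
    then have y: "y \<in> X" "\<rho> s y < \<phi>"
      using base_set_subset_oball oball_subset_rball k by (force simp: rball_def)+
    then have "\<rho> x y < r"
      using \<phi> s x commute by metis
    with r y(1) show "y \<in> W"
      by (auto simp: rball_def)
  qed
  with n show thesis
    using that unfolding s_def by blast
qed

definition base_family :: "nat \<Rightarrow> 'a set set" where
  "base_family j = base_set (fst (prod_decode j)) (snd (prod_decode j)) ` X"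

sublocale sigma_locally_finite_base rho_topology base_family
proof
  show "t1_space rho_topology"
    by (rule t1_rho_topology)
  show "regular_space rho_topology"
    by (rule regular_rho_topology)
  show "openin rho_topology W" if "W \<in> base_family j" for j W
    using that openin_base_set unfolding base_family_def by blast
  show "locally_finite_in rho_topology (base_family j)" for j
    unfolding base_family_def by (rule locally_finite_base_sets)
  show "\<exists>j B. B \<in> base_family j \<and> x \<in> B \<and> B \<subseteq> W"
    if W: "openin rho_topology W" "x \<in> W" for W x
  proof -
    obtain k n where "x \<in> base_set k n (least_centre k x)" "base_set k n (least_centre k x) \<subseteq> W"
      using base_set_within_open[OF W] by blast
    moreover have "base_set k n (least_centre k x) \<in> base_family (prod_encode (k, n))"
      unfolding base_family_def using least_centre(1) W openin_subset by fastforce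
    ultimately show ?thesis
      by blast
  qed
qed

end

theorem mainTheorem9:
  fixes X :: "'a set" and \<rho> :: "'a \<Rightarrow> 'a \<Rightarrow> real"
  assumes nonempty: "X \<noteq> {}"
    and nonneg: "\<forall>x\<in>X. \<forall>y\<in>X. \<rho> x y \<ge> 0"
    and I: "\<forall>x\<in>X. \<forall>y\<in>X. \<rho> x y = 0 \<longleftrightarrow> x = y"
    and II: "\<forall>x\<in>X. \<forall>y\<in>X. \<rho> x y = \<rho> y x"
    and VI: "\<forall>a\<in>X. \<forall>\<epsilon>>0. \<exists>\<phi>>0. \<forall>b\<in>X. \<forall>c\<in>X.
               \<rho> a b < \<phi> \<and> \<rho> c b < \<phi> \<longrightarrow> \<rho> a c < \<epsilon>"
  shows "\<exists>d. is_metric_on X d \<and>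
           (\<forall>x s. x \<in> X \<and> (\<forall>n. s n \<in> X) \<longrightarrow>
              ((\<lambda>n. \<rho> (s n) x) \<longlonglongrightarrow> 0) = ((\<lambda>n. d (s n) x) \<longlonglongrightarrow> 0))"
proof -
  interpret coherent_semimetric X \<rho>
  proof
    show "\<And>x y. x \<in> X \<Longrightarrow> y \<in> X \<Longrightarrow> 0 \<le> \<rho> x y"
      using nonneg by blast
    show "\<And>x y. x \<in> X \<Longrightarrow> y \<in> X \<Longrightarrow> \<rho> x y = 0 \<longleftrightarrow> x = y"
      using I by blast
    show "\<And>x y. x \<in> X \<Longrightarrow> y \<in> X \<Longrightarrow> \<rho> x y = \<rho> y x"
      using II by blast
    show "\<And>a \<epsilon>. a \<in> X \<Longrightarrow> 0 < \<epsilon> \<Longrightarrow>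
        \<exists>\<phi>>0. \<forall>b\<in>X. \<forall>c\<in>X. \<rho> a b < \<phi> \<and> \<rho> c b < \<phi> \<longrightarrow> \<rho> a c < \<epsilon>"
      using VI by blast
  qed
  have "is_metric_on X D"
    using D_is_metric by simp
  moreover have "(\<lambda>n. \<rho> (s n) x) \<longlonglongrightarrow> 0 \<longleftrightarrow> (\<lambda>n. D (s n) x) \<longlonglongrightarrow> 0"
    if "x \<in> X" "\<forall>n. s n \<in> X" for x s
    using limitin_rho_topology_iff[of x s] tendsto_D_iff_limitin[of x s] that by simp
  ultimately show ?thesis
    by (intro exI[of _ D]) blast
qed

end
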